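(* For $n\ge2$, let $\ell=\lfloor (n+1)/2\rfloor$ and \[M_n(x)=2\sum_{k=1}^{\ell} d_{n,k-1}\,x^k(1+x)^{\ell-k}.\] Then $R_n(x)=(1+x)^{\lfloor (n-2)/2\rfloor}M_n(x)$, $M_n$ has nonnegative integer coefficients, and $M_n(-1)=2(-1)^{\ell}d_{n,\ell-1}\neq0$; hence $-1$ is a root of $R_n(x)$ of multiplicity exactly $\lfloor (n-2)/2\rfloor$.
   Context: $R_n(x)=\sum_{\pi\in\mathfrak S_n}x^{\mathrm{run}(\pi)}$, where $\mathrm{run}(\pi)$ is $1$ plus the number of $i\in\{2,\dots,n-1\}$ with $\pi_{i-1}<\pi_i>\pi_{i+1}$ or $\pi_{i-1}>\pi_i<\pi_{i+1}$. A descent of $\pi$ is an index $i\in[n-1]$ with $\pi_i>\pi_{i+1}$. For an index $i$, the $\pi_i$-factorization is $\pi=w_1w_2\pi_iw_4w_5$ where $w_2$ is the longest factor ending at position $i-1$ with all letters $>\pi_i$ and $w_4$ the longest factor starting at position $i+1$ with all letters $>\pi_i$. $\pi\in\mathfrak S_n$ is an André permutation if (i) no $i\in\{2,\dots,n-1\}$ has $\pi_{i-1}>\pi_i>\pi_{i+1}$, (ii) $\pi_{n-1}<\pi_n$, and (iii) for every $i\in\{2,\dots,n-1\}$ with $\pi_{i-1}>\pi_i<\pi_{i+1}$, $\max(w_2)<\max(w_4)$ in the $\pi_i$-factorization. $d_{n,i}$ is the number of André permutations in $\mathfrak S_n$ with exactly $i$ descents. *)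

theory Defs
  imports "HOL-Combinatorics.Multiset_Permutations" "HOL-Computational_Algebra.Polynomial"
begin

text \<open>Permutations of [n] are represented as lists (one-line notation); the paper's
position i (1-based) corresponds to list index i-1.\<close>

abbreviation perms :: "nat \<Rightarrow> nat list set" where
  "perms n \<equiv> permutations_of_set {1..n}"

definition turning_points :: "nat list \<Rightarrow> nat set" where
  "turning_points xs = {i. 0 < i \<and> i + 1 < length xs \<and>
     ((xs!(i-1) < xs!i \<and> xs!i > xs!(i+1)) \<or> (xs!(i-1) > xs!i \<and> xs!i < xs!(i+1)))}"

definition run :: "nat list \<Rightarrow> nat" where
  "run xs = 1 + card (turning_points xs)"

definition descents :: "nat list \<Rightarrow> nat set" where
  "descents xs = {i. i + 1 < length xs \<and> xs!i > xs!(i+1)}"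

definition fact_w2 :: "nat list \<Rightarrow> nat \<Rightarrow> nat list" where
  "fact_w2 xs i = rev (takeWhile (\<lambda>y. y > xs!i) (rev (take i xs)))"

definition fact_w4 :: "nat list \<Rightarrow> nat \<Rightarrow> nat list" where
  "fact_w4 xs i = takeWhile (\<lambda>y. y > xs!i) (drop (i+1) xs)"

definition andre :: "nat list \<Rightarrow> bool" where
  "andre xs \<longleftrightarrow>
     (\<forall>i. 0 < i \<and> i + 1 < length xs \<longrightarrow> \<not> (xs!(i-1) > xs!i \<and> xs!i > xs!(i+1))) \<and>
     (2 \<le> length xs \<longrightarrow> xs!(length xs - 2) < xs!(length xs - 1)) \<and>
     (\<forall>i. 0 < i \<and> i + 1 < length xs \<and> xs!(i-1) > xs!i \<and> xs!i < xs!(i+1) \<longrightarrow>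
          Max (set (fact_w2 xs i)) < Max (set (fact_w4 xs i)))"

definition d :: "nat \<Rightarrow> nat \<Rightarrow> nat" where
  "d n i = card {xs \<in> perms n. andre xs \<and> card (descents xs) = i}"

definition R :: "nat \<Rightarrow> int poly" where
  "R n = (\<Sum>xs\<in>perms n. monom 1 (run xs))"

definition M :: "nat \<Rightarrow> int poly" where
  "M n = (let l = (n + 1) div 2 in
     2 * (\<Sum>k=1..l. smult (int (d n (k - 1))) ([:0, 1:] ^ k * [:1, 1:] ^ (l - k))))"

end

theory Submission
  imports Defs
begin

(*
  Inserting the letter n + 1 into the n + 1 gaps of a permutation of [n] gives the classical
  recurrence R_(n+1) = x (1 - x^2) R_n' + (2 x + (n - 1) x^2) R_n.

  Cutting an Andre permutation at its least letter splits it into two Andre permutations, the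
  largest letter lying in the right-hand one.  This gives a binomial convolution for the descent
  polynomials D_n of Andre permutations, which is equivalent to the linear recurrence
  D_(n+1) = (1 + (n - 1) x) D_n + x (1 - 2 x) D_n', i.e. to a two-term recurrence for the
  numbers d_(n,i).  It shows that d_(n,i) = 0 for 2 i >= n and that d_(n,l-1) > 0.

  With this recurrence, R_n = 2 sum_j d_(n,j) x^(j+1) (1 + x)^(n-2-j) is preserved by the
  run recurrence.  Since only the terms j < l occur, (1 + x)^((n-2) div 2) factors out and
  leaves M_n; at x = -1 only the top summand x^l d_(n,l-1) of M_n survives.
*)

section \<open>The recurrence for alternating runs\<close>

fun turns :: "nat list \<Rightarrow> nat" where
  "turns (a # b # c # r) = (if (a < b \<and> c < b) \<or> (b < a \<and> b < c) then 1 else 0) + turns (b # c # r)"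
| "turns _ = 0"

lemma turning_points_Cons:
  "turning_points (a # b # c # r) =
     (if (a < b \<and> c < b) \<or> (b < a \<and> b < c) then {1} else {}) \<union> Suc ` turning_points (b # c # r)"
  (is "?L = ?R")
proof (rule set_eqI)
  fix i
  show "i \<in> ?L \<longleftrightarrow> i \<in> ?R"
    by (cases i; cases "i - 1") (auto simp: turning_points_def nth_Cons')
qed

lemma finite_turning_points: "finite (turning_points xs)"
  unfolding turning_points_def by (rule finite_subset[of _ "{..<length xs}"]) auto

lemma card_turning_points: "card (turning_points xs) = turns xs"
proof (induction xs rule: turns.induct)
  case (1 a b c r)
  have "1 \<notin> Suc ` turning_points (b # c # r)"
    by (auto simp: turning_points_def)
  then show ?case
    using 1 finite_turning_points[of "b # c # r"]
    by (simp add: turning_points_Cons card_insert_if card_image)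
qed (auto simp: turning_points_def)

lemma run_eq_turns: "run xs = Suc (turns xs)"
  by (simp add: run_def card_turning_points)

definition X :: "int poly" where "X = [:0, 1:]"

lemma X_power_eq_monom: "X ^ k = monom 1 k"
  by (simp add: monom_altdef X_def)

lemma pderiv_X [simp]: "pderiv X = 1"
  by (simp add: X_def pderiv_pCons)

lemma one_plus_X: "[:1, 1:] = 1 + X"
  by (simp add: X_def one_pCons)

definition insert_at :: "nat \<Rightarrow> 'a \<Rightarrow> 'a list \<Rightarrow> 'a list" where
  "insert_at j a xs = take j xs @ a # drop j xs"

lemma insert_at_0 [simp]: "insert_at 0 a xs = a # xs"
  by (simp add: insert_at_def)

lemma insert_at_Suc_Cons [simp]: "insert_at (Suc j) a (b # xs) = b # insert_at j a xs"
  by (simp add: insert_at_def)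

text \<open>Inserting a new maximum into the \<open>n + 1\<close> gaps of a list with \<open>t\<close> turning points
  keeps \<open>t\<close> in \<open>t + 1\<close> gaps, raises it by one in two gaps, and by two in the remaining
  \<open>n - 2 - t\<close> gaps.\<close>

lemma sum_turns_insert_at:
  assumes "distinct p" "\<forall>y\<in>set p. y < N" "2 \<le> length p"
  shows "(\<Sum>j\<le>length p. X ^ turns (insert_at j N p)) =
    X ^ turns p * (of_nat (turns p + 1) + 2 * X + (of_nat (length p) - 2 - of_nat (turns p)) * X\<^sup>2)"
  using assms
proof (induction p rule: turns.induct)
  case (1 a b c r)
  let ?Q = "\<lambda>t n. of_nat (t + 1) + 2 * X + (of_nat n - 2 - of_nat t) * X\<^sup>2 :: int poly"
  let ?q = "b # c # r"
  let ?turn = "(a < b \<and> c < b) \<or> (b < a \<and> b < c)"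
  have ab: "a \<noteq> b" "b \<noteq> c" "a < N" "b < N" "c < N" using "1.prems"(1,2) by auto
  define rest where "rest = (\<Sum>j\<le>length r. X ^ turns (b # c # insert_at j N r))"
  have "(\<Sum>j\<le>length ?q. X ^ turns (insert_at j N ?q)) =
     X ^ turns (N # ?q) + X ^ turns (b # N # c # r) + rest"
    unfolding rest_def by (simp only: length_Cons sum.atMost_Suc_shift insert_at_0 insert_at_Suc_Cons add.assoc)
  then have rest: "rest = X ^ turns ?q * ?Q (turns ?q) (length ?q) - X ^ turns (N # ?q) - X ^ turns (b # N # c # r)"
    using 1 by (simp add: algebra_simps)
  have "(\<Sum>j\<le>length (a # ?q). X ^ turns (insert_at j N (a # ?q))) =
     X ^ turns (N # a # ?q) + X ^ turns (a # N # ?q) + X ^ turns (a # b # N # c # r)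
     + (\<Sum>j\<le>length r. X ^ turns (a # b # c # insert_at j N r))"
    by (simp only: length_Cons sum.atMost_Suc_shift insert_at_0 insert_at_Suc_Cons add.assoc)
  also have "(\<Sum>j\<le>length r. X ^ turns (a # b # c # insert_at j N r)) =
     X ^ (if ?turn then 1 else 0) * rest"
    by (simp add: rest_def sum_distrib_left power_add)
  finally have split: "(\<Sum>j\<le>length (a # ?q). X ^ turns (insert_at j N (a # ?q))) =
     X ^ turns (N # a # ?q) + X ^ turns (a # N # ?q) + X ^ turns (a # b # N # c # r)
     + X ^ (if ?turn then 1 else 0) * rest" .
  show ?case
  proof (cases r)
    case Nil
    show ?thesis unfolding split rest using ab
      by (cases "a < b"; cases "b < c") (simp_all add: Nil algebra_simps power2_eq_square)
  next
    case (Cons e r')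
    have ce: "c \<noteq> e" "e < N" using "1.prems"(1,2) Cons by auto
    define K where "K = turns (c # e # r')"
    have eqs: "turns (N # c # r) = (if c < e then 1 else 0) + K"
      "turns (b # c # r) = (if (b < c \<and> e < c) \<or> (c < b \<and> c < e) then 1 else 0) + K"
      using ce ab by (auto simp: Cons K_def)
    have len: "length r = Suc (length r')" using Cons by simp
    show ?thesis unfolding split rest using ab ce
      by (cases "a < b"; cases "b < c"; cases "c < e")
        (simp_all add: eqs len algebra_simps power2_eq_square power_add)
  qed
next
  case ("2_3" a b)
  then have "a \<noteq> b" "a < N" "b < N" by auto
  then show ?case
    by (cases "a < b") (simp_all add: numeral_2_eq_2 algebra_simps power2_eq_square)
qed auto

lemma append_Cons_eq_iff_same:
  "a \<notin> set xs \<Longrightarrow> a \<notin> set xs' \<Longrightarrow> xs @ a # ys = xs' @ a # ys' \<longleftrightarrow> xs = xs' \<and> ys = ys'"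
proof (induction xs arbitrary: xs')
  case Nil then show ?case by (cases xs') auto
next
  case (Cons b xs) then show ?case by (cases xs') auto
qed

lemma permutations_of_set_insert_at_bij:
  assumes "finite A" "a \<notin> A"
  shows "bij_betw (\<lambda>(p, j). insert_at j a p) (permutations_of_set A \<times> {..card A}) (permutations_of_set (insert a A))"
proof (rule bij_betw_imageI)
  show "inj_on (\<lambda>(p, j). insert_at j a p) (permutations_of_set A \<times> {..card A})"
  proof (rule inj_onI, clarify)
    fix p j p' j'
    assume eq: "insert_at j a p = insert_at j' a p'"
      and mem: "p \<in> permutations_of_set A" "j \<le> card A" "p' \<in> permutations_of_set A" "j' \<le> card A"
    have "a \<notin> set (take j p)" "a \<notin> set (take j' p')"
      using mem assms(2) by (auto simp: permutations_of_set_def dest: in_set_takeD)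
    with eq have "take j p = take j' p'" "drop j p = drop j' p'"
      unfolding insert_at_def by (auto simp: append_Cons_eq_iff_same)
    moreover have "length p = card A" using mem assms(1) by (simp add: length_finite_permutations_of_set)
    ultimately show "p = p' \<and> j = j'" using mem by (metis append_take_drop_id length_take min.absorb2)
  qed
next
  show "(\<lambda>(p, j). insert_at j a p) ` (permutations_of_set A \<times> {..card A}) = permutations_of_set (insert a A)"
  proof (intro equalityI subsetI)
    fix xs assume "xs \<in> (\<lambda>(p, j). insert_at j a p) ` (permutations_of_set A \<times> {..card A})"
    then obtain p j where p: "p \<in> permutations_of_set A" and xs: "xs = insert_at j a p" by auto
    have "set p = set (take j p) \<union> set (drop j p)" "distinct (take j p @ drop j p)"
      using p by (simp_all add: permutations_of_set_def flip: set_append)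
    with p assms(2) show "xs \<in> permutations_of_set (insert a A)"
      unfolding xs insert_at_def permutations_of_set_def
      by (auto dest: in_set_takeD in_set_dropD simp del: append_take_drop_id)
  next
    fix xs assume xs: "xs \<in> permutations_of_set (insert a A)"
    then have "a \<in> set xs" by (simp add: permutations_of_set_def)
    then obtain ys zs where yz: "xs = ys @ a # zs" by (meson split_list)
    then have "ys @ zs \<in> permutations_of_set A"
      using xs assms(2) by (auto simp: permutations_of_set_def)
    moreover from this have "length ys \<le> card A"
      using assms(1) by (auto dest: length_finite_permutations_of_set)
    ultimately show "xs \<in> (\<lambda>(p, j). insert_at j a p) ` (permutations_of_set A \<times> {..card A})"
      by (intro image_eqI[where x = "(ys @ zs, length ys)"]) (auto simp: yz insert_at_def)
  qed
qed

definition runs_op :: "nat \<Rightarrow> int poly \<Rightarrow> int poly" where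
  "runs_op n P = X * (1 - X\<^sup>2) * pderiv P + (2 * X + (of_nat n - 1) * X\<^sup>2) * P"

lemma pderiv_sum: "pderiv (sum f A) = (\<Sum>x\<in>A. pderiv (f x))"
  by (induction A rule: infinite_finite_induct) (auto simp: pderiv_add)

lemma runs_op_sum: "runs_op n (sum f A) = (\<Sum>x\<in>A. runs_op n (f x))"
  unfolding runs_op_def pderiv_sum by (simp add: sum_distrib_left sum.distrib)

lemma runs_op_smult: "runs_op n (smult c P) = smult c (runs_op n P)"
  by (simp add: runs_op_def pderiv_smult smult_add_right smult_diff_right)

lemma runs_op_X_power:
  "runs_op n (X ^ Suc t) =
    X * X ^ t * (of_nat (t + 1) + 2 * X + (of_nat n - 2 - of_nat t) * X\<^sup>2)"
  unfolding runs_op_def pderiv_power_Suc pderiv_X of_nat_mult_conv_smult[symmetric]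
  by (simp add: algebra_simps power2_eq_square)

lemma R_eq_sum_X_power: "R n = (\<Sum>xs\<in>perms n. X ^ Suc (turns xs))"
  by (simp add: R_def X_power_eq_monom run_eq_turns del: power_Suc)

lemma R_Suc:
  assumes "2 \<le> n"
  shows "R (Suc n) = runs_op n (R n)"
proof -
  have "R (Suc n) = (\<Sum>(p, j)\<in>perms n \<times> {..n}. X ^ Suc (turns (insert_at j (Suc n) p)))"
    unfolding R_eq_sum_X_power
    using sum.reindex_bij_betw[OF permutations_of_set_insert_at_bij[of "{1..n}" "Suc n"],
        of "\<lambda>xs. X ^ Suc (turns xs)"]
    by (simp add: case_prod_unfold atLeastAtMostSuc_conv)
  also have "\<dots> = (\<Sum>p\<in>perms n. X * (\<Sum>j\<le>n. X ^ turns (insert_at j (Suc n) p)))"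
    by (simp add: sum.cartesian_product[symmetric] sum_distrib_left)
  also have "\<dots> = (\<Sum>p\<in>perms n. runs_op n (X ^ Suc (turns p)))"
  proof (rule sum.cong[OF refl])
    fix p assume p: "p \<in> perms n"
    then have "distinct p" "length p = n" "\<forall>y\<in>set p. y < Suc n"
      by (auto simp: permutations_of_set_def length_finite_permutations_of_set)
    then show "X * (\<Sum>j\<le>n. X ^ turns (insert_at j (Suc n) p)) = runs_op n (X ^ Suc (turns p))"
      using sum_turns_insert_at[of p "Suc n"] assms by (simp add: runs_op_X_power del: power_Suc)
  qed
  also have "\<dots> = runs_op n (R n)"
    unfolding R_eq_sum_X_power runs_op_sum ..
  finally show ?thesis .
qed

section \<open>Andre permutations\<close>

fun ndes :: "nat list \<Rightarrow> nat" where
  "ndes (a # b # r) = (if b < a then 1 else 0) + ndes (b # r)"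
| "ndes _ = 0"

lemma descents_Cons: "descents (a # b # r) = (if b < a then {0} else {}) \<union> Suc ` descents (b # r)"
  (is "?L = ?R")
proof (rule set_eqI)
  fix i
  show "i \<in> ?L \<longleftrightarrow> i \<in> ?R"
    by (cases i) (auto simp: descents_def)
qed

lemma finite_descents: "finite (descents xs)"
  unfolding descents_def by (rule finite_subset[of _ "{..<length xs}"]) auto

lemma card_descents: "card (descents xs) = ndes xs"
proof (induction xs rule: ndes.induct)
  case (1 a b r)
  have "0 \<notin> Suc ` descents (b # r)" by auto
  then show ?case
    using 1 finite_descents[of "b # r"] by (simp add: descents_Cons card_insert_if card_image)
qed (auto simp: descents_def)

definition no_double_descent :: "nat list \<Rightarrow> bool" where
  "no_double_descent xs \<longleftrightarrow>
     (\<forall>i. 0 < i \<and> i + 1 < length xs \<longrightarrow> \<not> (xs!(i-1) > xs!i \<and> xs!i > xs!(i+1)))"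

definition ends_ascending :: "nat list \<Rightarrow> bool" where
  "ends_ascending xs \<longleftrightarrow> (2 \<le> length xs \<longrightarrow> xs!(length xs - 2) < xs!(length xs - 1))"

definition valley_condition :: "nat list \<Rightarrow> bool" where
  "valley_condition xs \<longleftrightarrow>
     (\<forall>i. 0 < i \<and> i + 1 < length xs \<and> xs!(i-1) > xs!i \<and> xs!i < xs!(i+1) \<longrightarrow>
          Max (set (fact_w2 xs i)) < Max (set (fact_w4 xs i)))"

lemma andre_iff: "andre xs \<longleftrightarrow> no_double_descent xs \<and> ends_ascending xs \<and> valley_condition xs"
  unfolding andre_def no_double_descent_def ends_ascending_def valley_condition_def by blast

lemma split_index_cases:
  fixes i k l :: nat
  assumes "0 < i" "i + 1 < k + 1 + l"
  obtains "i + 1 < k" | "2 \<le> k" "i = k - 1" | "1 \<le> k" "1 \<le> l" "i = k"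
    | "2 \<le> l" "i = k + 1" | j where "i = k + 1 + j" "0 < j" "j + 1 < l"
proof -
  consider "i + 1 < k" | "i + 1 = k" | "i = k" | "i = k + 1" | "k + 1 < i" by linarith
  then show ?thesis
  proof cases
    case 5
    then have "i = k + 1 + (i - k - 1)" "0 < i - k - 1" "i - k - 1 + 1 < l" using assms by auto
    then show ?thesis using that(5) by blast
  qed (use that assms in auto)
qed

lemma nth_append_Cons_split:
  "(u @ m # v) ! i = (if i < length u then u ! i else if i = length u then m else v ! (i - length u - 1))"
  by (simp add: nth_append nth_Cons')

lemma fact_w2_append_left: "i < length u \<Longrightarrow> fact_w2 (u @ v) i = fact_w2 u i"
  by (simp add: fact_w2_def nth_append)

lemma fact_w4_append_right:
  "fact_w4 (u @ m # v) (length u + 1 + j) = fact_w4 v j"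
  by (simp add: fact_w4_def nth_append_Cons_split)

context
  fixes u v :: "nat list" and m :: nat
  assumes min: "\<forall>y \<in> set u \<union> set v. m < y"
begin

lemma fact_w4_split_left:
  assumes "i < length u"
  shows "fact_w4 (u @ m # v) i = fact_w4 u i"
proof -
  have "m < u ! i" using min assms by simp
  with assms show ?thesis by (simp add: fact_w4_def nth_append takeWhile_tail)
qed

lemma fact_w2_split_right:
  assumes "j < length v"
  shows "fact_w2 (u @ m # v) (length u + 1 + j) = fact_w2 v j"
proof -
  have "m < v ! j" using min assms by simp
  then show ?thesis using assms by (simp add: fact_w2_def nth_append_Cons_split takeWhile_tail)
qed

lemma fact_w2_split_min: "fact_w2 (u @ m # v) (length u) = u"
proof -
  have "takeWhile ((<) m) (rev u) = rev u" using min by simp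
  then show ?thesis by (simp add: fact_w2_def nth_append del: takeWhile_eq_all_conv)
qed

lemma fact_w4_split_min: "fact_w4 (u @ m # v) (length u) = v"
  using min by (simp add: fact_w4_def nth_append)

lemma no_double_descent_splitD:
  assumes h: "no_double_descent (u @ m # v)"
  shows "no_double_descent u \<and> (2 \<le> length u \<longrightarrow> \<not> u!(length u - 2) > u!(length u - 1)) \<and>
    no_double_descent v"
proof -
  have "no_double_descent u" unfolding no_double_descent_def
  proof (intro allI impI)
    fix i assume i: "0 < i \<and> i + 1 < length u"
    then show "\<not> (u!(i-1) > u!i \<and> u!i > u!(i+1))"
      using h[unfolded no_double_descent_def, rule_format, of i]
      by (auto simp: nth_append_Cons_split split: if_splits)
  qed
  moreover have "\<not> u!(length u - 2) > u!(length u - 1)" if l: "2 \<le> length u"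
  proof -
    have "m < u ! (length u - 1)" using min l by simp
    moreover have "(u @ m # v) ! (length u - 1 - 1) = u!(length u - 2)"
      "(u @ m # v) ! (length u - 1) = u!(length u - 1)"
      "(u @ m # v) ! (length u - 1 + 1) = m" using l by (auto simp: nth_append numeral_2_eq_2)
    ultimately show ?thesis
      using h[unfolded no_double_descent_def, rule_format, of "length u - 1"] l by auto
  qed
  moreover have "no_double_descent v" unfolding no_double_descent_def
  proof (intro allI impI)
    fix i assume i: "0 < i \<and> i + 1 < length v"
    then show "\<not> (v!(i-1) > v!i \<and> v!i > v!(i+1))"
      using h[unfolded no_double_descent_def, rule_format, of "length u + 1 + i"]
      by (auto simp: nth_append_Cons_split split: if_splits)
  qed
  ultimately show ?thesis by blast
qed

lemma no_double_descent_splitI: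
  assumes h: "no_double_descent u \<and> (2 \<le> length u \<longrightarrow> \<not> u!(length u - 2) > u!(length u - 1))
    \<and> no_double_descent v"
  shows "no_double_descent (u @ m # v)"
  unfolding no_double_descent_def
proof (intro allI impI)
  fix i assume "0 < i \<and> i + 1 < length (u @ m # v)"
  then have i: "0 < i" "i + 1 < length u + 1 + length v" by auto
  show "\<not> ((u @ m # v)!(i-1) > (u @ m # v)!i \<and> (u @ m # v)!i > (u @ m # v)!(i+1))"
  proof (cases rule: split_index_cases[OF i])
    case 1 then show ?thesis using h i(1) unfolding no_double_descent_def
      by (auto simp: nth_append_Cons_split split: if_splits)
  next
    case 2 then show ?thesis using h
      by (auto simp: nth_append_Cons_split numeral_2_eq_2 Suc_diff_Suc split: if_splits)
  next
    case 3
    then have "m < v ! 0" using min by (cases v) auto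
    then show ?thesis using 3 by (auto simp: nth_append_Cons_split split: if_splits)
  next
    case 4
    then have "m < v ! 0" using min by (cases v) auto
    then show ?thesis using 4 by (auto simp: nth_append_Cons_split split: if_splits)
  next
    case (5 j) then show ?thesis using h[THEN conjunct2, THEN conjunct2] unfolding no_double_descent_def
      by (auto simp: nth_append_Cons_split split: if_splits)
  qed
qed

lemma no_double_descent_split:
  "no_double_descent (u @ m # v) \<longleftrightarrow>
     no_double_descent u \<and> (2 \<le> length u \<longrightarrow> \<not> u!(length u - 2) > u!(length u - 1)) \<and>
     no_double_descent v"
  using no_double_descent_splitD no_double_descent_splitI by blast

lemma ends_ascending_split:
  "ends_ascending (u @ m # v) \<longleftrightarrow> (if v = [] then u = [] else ends_ascending v)"
proof (cases v rule: rev_cases)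
  case Nil
  then show ?thesis
    using min by (cases u rule: rev_cases) (auto simp: ends_ascending_def nth_append)
next
  case (snoc v' b)
  then show ?thesis
    using min by (cases v' rule: rev_cases) (auto simp: ends_ascending_def nth_append)
qed

lemma valley_condition_splitD:
  assumes h: "valley_condition (u @ m # v)"
  shows "valley_condition u \<and> valley_condition v \<and> (u \<noteq> [] \<and> v \<noteq> [] \<longrightarrow> Max (set u) < Max (set v))"
proof -
  have "valley_condition u" unfolding valley_condition_def
  proof (intro allI impI)
    fix i assume i: "0 < i \<and> i + 1 < length u \<and> u!(i-1) > u!i \<and> u!i < u!(i+1)"
    have "(u @ m # v)!(i-1) = u!(i-1)" "(u @ m # v)!i = u!i" "(u @ m # v)!(i+1) = u!(i+1)"
      using i by (auto simp: nth_append)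
    then show "Max (set (fact_w2 u i)) < Max (set (fact_w4 u i))"
      using h[unfolded valley_condition_def, rule_format, of i] i
      by (simp add: fact_w2_append_left fact_w4_split_left)
  qed
  moreover have "valley_condition v" unfolding valley_condition_def
  proof (intro allI impI)
    fix i assume i: "0 < i \<and> i + 1 < length v \<and> v!(i-1) > v!i \<and> v!i < v!(i+1)"
    have "(u @ m # v)!(length u + 1 + i - 1) = v!(i-1)" "(u @ m # v)!(length u + 1 + i) = v!i"
       "(u @ m # v)!(length u + 1 + i + 1) = v!(i+1)"
      using i by (auto simp: nth_append_Cons_split)
    then show "Max (set (fact_w2 v i)) < Max (set (fact_w4 v i))"
      using h[unfolded valley_condition_def, rule_format, of "length u + 1 + i"] i
        fact_w2_split_right[of i] fact_w4_append_right[of u m v i] by simp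
  qed
  moreover have "Max (set u) < Max (set v)" if uv: "u \<noteq> []" "v \<noteq> []"
  proof -
    have "m < u ! (length u - 1)" "m < v ! 0" using uv min by (auto simp: last_conv_nth)
    moreover have "(u @ m # v)!(length u - 1) = u ! (length u - 1)" "(u @ m # v)!(length u) = m"
      "(u @ m # v)!(length u + 1) = v ! 0" using uv by (auto simp: nth_append)
    ultimately show ?thesis
      using h[unfolded valley_condition_def, rule_format, of "length u"] uv
      by (simp add: fact_w2_split_min fact_w4_split_min)
  qed
  ultimately show ?thesis by blast
qed

lemma valley_condition_splitI:
  assumes h: "valley_condition u \<and> valley_condition v \<and>
    (u \<noteq> [] \<and> v \<noteq> [] \<longrightarrow> Max (set u) < Max (set v))"
  shows "valley_condition (u @ m # v)"
  unfolding valley_condition_def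
proof (intro allI impI)
  fix i assume i: "0 < i \<and> i + 1 < length (u @ m # v) \<and> (u @ m # v)!(i-1) > (u @ m # v)!i
    \<and> (u @ m # v)!i < (u @ m # v)!(i+1)"
  then have i': "0 < i" "i + 1 < length u + 1 + length v" by auto
  show "Max (set (fact_w2 (u @ m # v) i)) < Max (set (fact_w4 (u @ m # v) i))"
  proof (cases rule: split_index_cases[OF i'])
    case 1
    have "(u @ m # v)!(i-1) = u!(i-1)" "(u @ m # v)!i = u!i" "(u @ m # v)!(i+1) = u!(i+1)"
      using 1 by (auto simp: nth_append)
    then show ?thesis using 1 i h unfolding valley_condition_def
      by (simp add: fact_w2_append_left fact_w4_split_left)
  next
    case 2
    have "m < u ! (length u - 1)" using 2 min by simp
    moreover have "(u @ m # v)!i = u ! (length u - 1)" "(u @ m # v)!(i+1) = m"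
      using 2 by (auto simp: nth_append)
    ultimately show ?thesis using i by auto
  next
    case 3
    then have "u \<noteq> []" "v \<noteq> []" by auto
    with 3 h show ?thesis by (simp add: fact_w2_split_min fact_w4_split_min del: Max_less_iff)
  next
    case 4
    have "m < v ! 0" using 4 min by (cases v) auto
    moreover have "(u @ m # v)!(i-1) = m" "(u @ m # v)!i = v ! 0"
      using 4 by (auto simp: nth_append)
    ultimately show ?thesis using i by auto
  next
    case (5 j)
    have "(u @ m # v)!(i-1) = v!(j-1)" "(u @ m # v)!i = v!j" "(u @ m # v)!(i+1) = v!(j+1)"
      using 5 by (auto simp: nth_append_Cons_split)
    then show ?thesis using 5 i h[unfolded valley_condition_def]
      fact_w2_split_right[of j] fact_w4_append_right[of u m v j] by simp
  qed
qed

lemma valley_condition_split: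
  "valley_condition (u @ m # v) \<longleftrightarrow>
     valley_condition u \<and> valley_condition v \<and> (u \<noteq> [] \<and> v \<noteq> [] \<longrightarrow> Max (set u) < Max (set v))"
  using valley_condition_splitD valley_condition_splitI by blast

end

lemma andre_split_min:
  assumes min: "\<forall>y \<in> set u \<union> set v. m < y" and "distinct u"
  shows "andre (u @ m # v) \<longleftrightarrow> (u = [] \<and> v = []) \<or>
           (v \<noteq> [] \<and> andre u \<and> andre v \<and> (u \<noteq> [] \<longrightarrow> Max (set u) < Max (set v)))"
proof -
  have "ends_ascending u \<longleftrightarrow> (2 \<le> length u \<longrightarrow> \<not> u!(length u - 2) > u!(length u - 1))"
  proof (cases "2 \<le> length u")
    case True
    then have "u!(length u - 2) \<noteq> u!(length u - 1)" using \<open>distinct u\<close>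
      by (simp add: nth_eq_iff_index_eq)
    then show ?thesis unfolding ends_ascending_def using True by auto
  qed (auto simp: ends_ascending_def)
  moreover have "no_double_descent [] \<and> ends_ascending [] \<and> valley_condition []"
    by (simp add: no_double_descent_def ends_ascending_def valley_condition_def)
  ultimately show ?thesis
    unfolding andre_iff no_double_descent_split[OF min] ends_ascending_split[OF min]
      valley_condition_split[OF min] by auto
qed

lemma ndes_split_min:
  "\<forall>y \<in> set u \<union> set v. m < y \<Longrightarrow> ndes (u @ m # v) = ndes u + (if u = [] then 0 else 1) + ndes v"
proof (induction u rule: ndes.induct)
  case ("2_1") then show ?case by (cases v) auto
next
  case ("2_2" a) then show ?case by (cases v) auto
qed simp_all

lemma ndes_map_strict_mono: "strict_mono_on (set xs) f \<Longrightarrow> ndes (map f xs) = ndes xs"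
proof (induction xs rule: ndes.induct)
  case (1 a b r)
  have "strict_mono_on (set (b # r)) f" by (rule monotone_on_subset[OF "1.prems"]) auto
  with 1 show ?case by (simp add: strict_mono_on_less[OF "1.prems"])
qed simp_all

lemma Max_image_strict_mono:
  assumes f: "strict_mono_on S f" and B: "B \<subseteq> S" "finite B" "B \<noteq> {}"
  shows "Max (f ` B) = f (Max B)"
proof (rule Max_eqI)
  show "f (Max B) \<in> f ` B" using B by simp
  fix y assume "y \<in> f ` B"
  then obtain b where "b \<in> B" "y = f b" by auto
  with B show "y \<le> f (Max B)"
    by (simp add: strict_mono_on_less_eq[OF f] subsetD)
qed (use B in simp)

lemma fact_w2_map_strict_mono:
  assumes "strict_mono_on (set xs) f" "i < length xs"
  shows "fact_w2 (map f xs) i = map f (fact_w2 xs i)"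
proof -
  have "takeWhile (\<lambda>y. f (xs!i) < f y) (rev (take i xs)) = takeWhile (\<lambda>y. xs!i < y) (rev (take i xs))"
    using assms by (intro takeWhile_cong) (auto simp: strict_mono_on_less dest: in_set_takeD)
  then show ?thesis using assms by (simp add: fact_w2_def rev_map take_map takeWhile_map o_def)
qed

lemma fact_w4_map_strict_mono:
  assumes "strict_mono_on (set xs) f" "i < length xs"
  shows "fact_w4 (map f xs) i = map f (fact_w4 xs i)"
proof -
  have "takeWhile (\<lambda>y. f (xs!i) < f y) (drop (Suc i) xs) = takeWhile (\<lambda>y. xs!i < y) (drop (Suc i) xs)"
    using assms by (intro takeWhile_cong) (auto simp: strict_mono_on_less dest: in_set_dropD)
  then show ?thesis using assms by (simp add: fact_w4_def drop_map takeWhile_map o_def)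
qed

lemma fact_w2_nonempty: "0 < i \<Longrightarrow> i < length xs \<Longrightarrow> xs!(i-1) > xs!i \<Longrightarrow> fact_w2 xs i \<noteq> []"
  by (cases i) (auto simp: fact_w2_def take_Suc_conv_app_nth)

lemma fact_w4_nonempty: "i + 1 < length xs \<Longrightarrow> xs!i < xs!(i+1) \<Longrightarrow> fact_w4 xs i \<noteq> []"
  by (simp add: fact_w4_def Cons_nth_drop_Suc[symmetric])

lemma set_fact_w2_subset: "set (fact_w2 xs i) \<subseteq> set xs"
  by (auto simp: fact_w2_def dest!: set_takeWhileD dest: in_set_takeD)

lemma set_fact_w4_subset: "set (fact_w4 xs i) \<subseteq> set xs"
  by (auto simp: fact_w4_def dest: set_takeWhileD in_set_dropD)

lemma andre_map_strict_mono:
  assumes f: "strict_mono_on (set xs) f"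
  shows "andre (map f xs) \<longleftrightarrow> andre xs"
proof -
  have less: "f (xs!a) < f (xs!b) \<longleftrightarrow> xs!a < xs!b" if "a < length xs" "b < length xs" for a b
    using that by (simp add: strict_mono_on_less[OF f])
  have Max_less: "Max (set (fact_w2 (map f xs) i)) < Max (set (fact_w4 (map f xs) i)) \<longleftrightarrow>
      Max (set (fact_w2 xs i)) < Max (set (fact_w4 xs i))"
    if i: "0 < i" "i + 1 < length xs" "xs!(i-1) > xs!i" "xs!i < xs!(i+1)" for i
  proof -
    let ?w2 = "set (fact_w2 xs i)" and ?w4 = "set (fact_w4 xs i)"
    have ne: "?w2 \<noteq> {}" "?w4 \<noteq> {}" using i fact_w2_nonempty fact_w4_nonempty by auto
    have "Max ?w2 \<in> set xs" "Max ?w4 \<in> set xs"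
      using ne set_fact_w2_subset set_fact_w4_subset by (meson List.finite_set Max_in subsetD)+
    moreover have "Max (f ` ?w2) = f (Max ?w2)" "Max (f ` ?w4) = f (Max ?w4)"
      using ne set_fact_w2_subset set_fact_w4_subset by (simp_all add: Max_image_strict_mono[OF f])
    ultimately show ?thesis using i
      by (simp add: fact_w2_map_strict_mono[OF f] fact_w4_map_strict_mono[OF f] strict_mono_on_less[OF f])
  qed
  show ?thesis unfolding andre_def length_map
    by (intro conj_cong all_cong imp_cong refl) (use less Max_less in auto)
qed

section \<open>Descent polynomials of Andre permutations\<close>

definition andre_weight :: "nat list \<Rightarrow> int poly" where
  "andre_weight xs = (if andre xs then X ^ ndes xs else 0)"

definition andre_poly_on :: "nat set \<Rightarrow> int poly" where
  "andre_poly_on S = (\<Sum>xs\<in>permutations_of_set S. andre_weight xs)"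

lemma andre_poly_on_image_strict_mono:
  assumes f: "strict_mono_on A f"
  shows "andre_poly_on (f ` A) = andre_poly_on A"
proof -
  have inj: "inj_on (map f) (permutations_of_set A)"
    by (rule inj_on_mapI, rule inj_on_subset[OF strict_mono_on_imp_inj_on[OF f]])
      (auto simp: permutations_of_set_def)
  have "andre_poly_on (f ` A) = (\<Sum>ys\<in>permutations_of_set A. andre_weight (map f ys))"
    unfolding andre_poly_on_def permutations_of_set_image_inj[OF strict_mono_on_imp_inj_on[OF f]]
    by (simp add: sum.reindex[OF inj])
  also have "\<dots> = andre_poly_on A" unfolding andre_poly_on_def
  proof (rule sum.cong[OF refl])
    fix ys assume "ys \<in> permutations_of_set A"
    then have "strict_mono_on (set ys) f"
      using f by (auto simp: permutations_of_set_def intro: monotone_on_subset)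
    then show "andre_weight (map f ys) = andre_weight ys"
      by (simp add: andre_weight_def andre_map_strict_mono ndes_map_strict_mono)
  qed
  finally show ?thesis .
qed

lemma andre_poly_on_standardize:
  assumes "finite S"
  shows "andre_poly_on S = andre_poly_on {1..card S}"
proof -
  define L where "L = sorted_list_of_set S"
  have L: "sorted_wrt (<) L" "length L = card S" "set L = S"
    using assms by (simp_all add: L_def)
  have "strict_mono_on {..<card S} ((!) L)"
    using L by (intro strict_mono_onI) (auto intro: sorted_wrt_nth_less)
  moreover have "(!) L ` {..<card S} = S"
    using L nth_image[of "card S" L] by (simp add: lessThan_atLeast0)
  moreover have "strict_mono_on {..<card S} Suc"
    by (rule strict_mono_onI) simp
  ultimately show ?thesis
    by (metis andre_poly_on_image_strict_mono image_Suc_lessThan)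
qed

lemma permutations_of_set_insert_split_bij:
  assumes "m \<notin> T"
  shows "bij_betw (\<lambda>(S, u, v). u @ m # v)
     (SIGMA S:Pow T. permutations_of_set S \<times> permutations_of_set (T - S))
     (permutations_of_set (insert m T))"
proof (rule bij_betw_imageI)
  show "inj_on (\<lambda>(S, u, v). u @ m # v) (SIGMA S:Pow T. permutations_of_set S \<times> permutations_of_set (T - S))"
  proof (rule inj_onI, clarify)
    fix S u v S' u' v'
    assume eq: "u @ m # v = u' @ m # v'" and "S \<subseteq> T" "S' \<subseteq> T"
      and "u \<in> permutations_of_set S" "u' \<in> permutations_of_set S'"
    then have "set u = S" "set u' = S'" "m \<notin> set u" "m \<notin> set u'"
      using assms by (auto simp: permutations_of_set_def)
    with eq show "S = S' \<and> (u, v) = (u', v')" by (auto simp: append_Cons_eq_iff_same)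
  qed
next
  show "(\<lambda>(S, u, v). u @ m # v) ` (SIGMA S:Pow T. permutations_of_set S \<times> permutations_of_set (T - S))
        = permutations_of_set (insert m T)"
  proof (intro equalityI subsetI)
    fix xs
    assume "xs \<in> (\<lambda>(S, u, v). u @ m # v) ` (SIGMA S:Pow T. permutations_of_set S \<times> permutations_of_set (T - S))"
    then show "xs \<in> permutations_of_set (insert m T)"
      using assms by (auto simp: permutations_of_set_def)
  next
    fix xs assume xs: "xs \<in> permutations_of_set (insert m T)"
    then have "m \<in> set xs" by (simp add: permutations_of_set_def)
    then obtain u v where uv: "xs = u @ m # v" by (meson split_list)
    then have "set u \<subseteq> T" "u \<in> permutations_of_set (set u)" "v \<in> permutations_of_set (T - set u)"
      using xs assms by (auto simp: permutations_of_set_def)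
    with uv show "xs \<in> (\<lambda>(S, u, v). u @ m # v) ` (SIGMA S:Pow T. permutations_of_set S \<times> permutations_of_set (T - S))"
      by (intro image_eqI[where x = "(set u, u, v)"]) auto
  qed
qed

lemma sum_permutations_of_set_insert:
  assumes "finite T" "m \<notin> T"
  shows "(\<Sum>xs\<in>permutations_of_set (insert m T). F xs) =
     (\<Sum>S\<in>Pow T. \<Sum>u\<in>permutations_of_set S. \<Sum>v\<in>permutations_of_set (T - S). F (u @ m # v))"
proof -
  have "(\<Sum>xs\<in>permutations_of_set (insert m T). F xs) =
      (\<Sum>(S, u, v)\<in>(SIGMA S:Pow T. permutations_of_set S \<times> permutations_of_set (T - S)). F (u @ m # v))"
    using sum.reindex_bij_betw[OF permutations_of_set_insert_split_bij[OF assms(2)], of F]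
    by (simp add: case_prod_unfold)
  also have "\<dots> = (\<Sum>S\<in>Pow T. \<Sum>(u, v)\<in>permutations_of_set S \<times> permutations_of_set (T - S). F (u @ m # v))"
    using assms(1) by (subst sum.Sigma) auto
  also have "\<dots> = (\<Sum>S\<in>Pow T. \<Sum>u\<in>permutations_of_set S. \<Sum>v\<in>permutations_of_set (T - S). F (u @ m # v))"
    by (simp add: sum.cartesian_product)
  finally show ?thesis .
qed

lemma sum_Pow_card:
  assumes "finite A"
  shows "(\<Sum>S\<in>Pow A. g (card S)) = (\<Sum>k\<le>card A. of_nat (card A choose k) * g k)"
proof -
  have "(\<Sum>S\<in>Pow A. g (card S)) = (\<Sum>k\<le>card A. \<Sum>S\<in>{S\<in>Pow A. card S = k}. g (card S))"
    using assms by (intro sum.group[symmetric]) (auto simp: card_mono)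
  also have "\<dots> = (\<Sum>k\<le>card A. of_nat (card A choose k) * g k)"
  proof (rule sum.cong[OF refl])
    fix k
    have "{S\<in>Pow A. card S = k} = {S. S \<subseteq> A \<and> card S = k}" by auto
    then show "(\<Sum>S\<in>{S\<in>Pow A. card S = k}. g (card S)) = of_nat (card A choose k) * g k"
      using n_subsets[OF assms] by simp
  qed
  finally show ?thesis .
qed

lemma Max_left_less_Max_right_iff:
  assumes "N \<in> set u \<union> set v" "\<forall>y\<in>set u \<union> set v. y \<le> N"
  shows "(v \<noteq> [] \<and> (u \<noteq> [] \<longrightarrow> Max (set u) < Max (set v))) \<longleftrightarrow> N \<notin> set u"
proof (cases "N \<in> set u")
  case True
  with assms have "Max (set u) = N" by (intro Max_eqI) auto
  with True assms show ?thesis by (auto simp flip: not_le)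
next
  case False
  with assms have "N \<in> set v" "Max (set v) = N" by (auto intro: Max_eqI)
  moreover have "Max (set u) < N" if "u \<noteq> []"
    using assms False that by (auto simp: order.strict_iff_order)
  ultimately show ?thesis using False by auto
qed

lemma andre_weight_split_min:
  assumes min: "\<forall>y\<in>set u \<union> set v. m < y" and "distinct u"
    and max: "N \<in> set u \<union> set v" "\<forall>y\<in>set u \<union> set v. y \<le> N"
  shows "andre_weight (u @ m # v) =
    (if N \<in> set u then 0 else X ^ (if u = [] then 0 else 1) * (andre_weight u * andre_weight v))"
proof -
  have "\<not> (u = [] \<and> v = [])" using max by auto
  with Max_left_less_Max_right_iff[OF max] show ?thesis
    unfolding andre_weight_def andre_split_min[OF min \<open>distinct u\<close>] ndes_split_min[OF min]
    by (auto simp: power_add)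
qed

lemma andre_poly_on_insert_min:
  assumes "finite T" "\<forall>y\<in>T. m < y" "N \<in> T" "\<forall>y\<in>T. y \<le> N"
  shows "andre_poly_on (insert m T) =
    (\<Sum>S\<in>Pow (T - {N}). X ^ (if S = {} then 0 else 1) * (andre_poly_on S * andre_poly_on (T - S)))"
proof -
  have "m \<notin> T" using assms(2) by auto
  have weight: "andre_weight (u @ m # v) =
      (if N \<in> S then 0 else X ^ (if S = {} then 0 else 1) * (andre_weight u * andre_weight v))"
    if "S \<in> Pow T" "u \<in> permutations_of_set S" "v \<in> permutations_of_set (T - S)" for S u v
  proof -
    have "set u = S" "distinct u" "set v = T - S" using that by (auto simp: permutations_of_set_def)
    with that assms show ?thesis by (subst andre_weight_split_min[of u v m N]) auto
  qed
  have "andre_poly_on (insert m T) =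
      (\<Sum>S\<in>Pow T. \<Sum>u\<in>permutations_of_set S. \<Sum>v\<in>permutations_of_set (T - S). andre_weight (u @ m # v))"
    unfolding andre_poly_on_def by (rule sum_permutations_of_set_insert[OF assms(1) \<open>m \<notin> T\<close>])
  also have "\<dots> = (\<Sum>S\<in>Pow T. if N \<in> S then 0 else X ^ (if S = {} then 0 else 1) * (andre_poly_on S * andre_poly_on (T - S)))"
    unfolding andre_poly_on_def sum_product
    by (intro sum.cong refl) (simp add: weight sum_distrib_left)
  also have "\<dots> = (\<Sum>S\<in>Pow (T - {N}). X ^ (if S = {} then 0 else 1) * (andre_poly_on S * andre_poly_on (T - S)))"
  proof -
    have "{S\<in>Pow T. N \<notin> S} = Pow (T - {N})" by auto
    then show ?thesis using assms(1) by (simp add: sum.If_cases Int_def)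
  qed
  finally show ?thesis .
qed

definition andre_poly :: "nat \<Rightarrow> int poly" where
  "andre_poly n = andre_poly_on {1..n}"

lemma andre_poly_Suc_convolution:
  assumes "1 \<le> n"
  shows "andre_poly (Suc n) =
    (\<Sum>k\<le>n - 1. of_nat (n - 1 choose k) * X ^ (if k = 0 then 0 else 1) * andre_poly k * andre_poly (n - k))"
proof -
  define T where "T = {2..Suc n}"
  have T: "finite T" "insert 1 T = {1..Suc n}" "card (T - {Suc n}) = n - 1"
    using assms by (auto simp: T_def)
  have "andre_poly (Suc n) =
      (\<Sum>S\<in>Pow (T - {Suc n}). X ^ (if S = {} then 0 else 1) * (andre_poly_on S * andre_poly_on (T - S)))"
    unfolding andre_poly_def T(2)[symmetric] using assms by (intro andre_poly_on_insert_min) (auto simp: T_def)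
  also have "\<dots> = (\<Sum>S\<in>Pow (T - {Suc n}). X ^ (if card S = 0 then 0 else 1) * (andre_poly (card S) * andre_poly (n - card S)))"
  proof (rule sum.cong[OF refl])
    fix S assume "S \<in> Pow (T - {Suc n})"
    then have S: "finite S" "S \<subseteq> T" using T(1) finite_subset by auto
    moreover have "card (T - S) = n - card S" using S T(1) by (simp add: card_Diff_subset T_def)
    ultimately show "X ^ (if S = {} then 0 else 1) * (andre_poly_on S * andre_poly_on (T - S)) =
        X ^ (if card S = 0 then 0 else 1) * (andre_poly (card S) * andre_poly (n - card S))"
      using T(1) by (simp add: andre_poly_def andre_poly_on_standardize[of S] andre_poly_on_standardize[of "T - S"])
  qed
  also have "\<dots> = (\<Sum>k\<le>n - 1. of_nat (n - 1 choose k) * (X ^ (if k = 0 then 0 else 1) * (andre_poly k * andre_poly (n - k))))"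
    using sum_Pow_card[of "T - {Suc n}"] T by simp
  finally show ?thesis by (simp add: mult.assoc)
qed

lemma andre_poly_0: "andre_poly 0 = 1"
  by (simp add: andre_poly_def andre_poly_on_def andre_weight_def andre_def)

lemma andre_poly_1: "andre_poly (Suc 0) = 1"
  by (simp add: andre_poly_def andre_poly_on_def andre_weight_def andre_def)

definition andre_conv :: "nat \<Rightarrow> int poly" where
  "andre_conv m = (\<Sum>k=1..m. of_nat (m choose k) * (andre_poly k * andre_poly (Suc m - k)))"

lemma andre_poly_Suc_Suc_conv: "andre_poly (Suc (Suc m)) = andre_poly (Suc m) + X * andre_conv m"
proof -
  have "{..m} = insert 0 {1..m}" by auto
  then show ?thesis
    using andre_poly_Suc_convolution[of "Suc m"]
    by (simp add: andre_conv_def andre_poly_0 sum_distrib_left algebra_simps)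
qed

lemma sum_choose_Suc_convolution:
  fixes a :: "nat \<Rightarrow> 'a::comm_semiring_1"
  shows "(\<Sum>k=1..Suc m. of_nat (Suc m choose k) * (a k * a (Suc (Suc m) - k))) =
     a 1 * a (Suc m) + (\<Sum>k=1..m. of_nat (m choose k) * (a (Suc k) * a (Suc m - k) + a k * a (Suc (Suc m) - k)))"
proof -
  have "(\<Sum>k=1..Suc m. of_nat (Suc m choose k) * (a k * a (Suc (Suc m) - k)))
      = (\<Sum>j\<le>m. of_nat (Suc m choose Suc j) * (a (Suc j) * a (Suc m - j)))"
    using sum.shift_bounds_cl_Suc_ivl[of "\<lambda>k. of_nat (Suc m choose k) * (a k * a (Suc (Suc m) - k))" 0 m]
    by (simp add: atMost_atLeast0)
  also have "\<dots> = (\<Sum>j\<le>m. of_nat (m choose j) * (a (Suc j) * a (Suc m - j)))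
      + (\<Sum>j\<le>m. of_nat (m choose Suc j) * (a (Suc j) * a (Suc m - j)))"
    by (simp add: sum.distrib[symmetric] algebra_simps)
  also have "(\<Sum>j\<le>m. of_nat (m choose j) * (a (Suc j) * a (Suc m - j)))
      = a 1 * a (Suc m) + (\<Sum>j=1..m. of_nat (m choose j) * (a (Suc j) * a (Suc m - j)))"
    by (simp add: atMost_atLeast0 sum.atLeast_Suc_atMost)
  also have "(\<Sum>j\<le>m. of_nat (m choose Suc j) * (a (Suc j) * a (Suc m - j)))
      = (\<Sum>k=1..Suc m. of_nat (m choose k) * (a k * a (Suc (Suc m) - k)))"
    using sum.shift_bounds_cl_Suc_ivl[of "\<lambda>k. of_nat (m choose k) * (a k * a (Suc (Suc m) - k))" 0 m]
    by (simp add: atMost_atLeast0)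
  also have "\<dots> = (\<Sum>k=1..m. of_nat (m choose k) * (a k * a (Suc (Suc m) - k)))"
    by (simp add: binomial_eq_0)
  finally show ?thesis by (simp add: sum.distrib algebra_simps)
qed

definition andre_op :: "nat \<Rightarrow> int poly \<Rightarrow> int poly" where
  "andre_op n P = P + (of_nat n - 1) * X * P + (X - 2 * X\<^sup>2) * pderiv P"

lemma andre_op_Suc: "andre_op (Suc n) P = andre_op n P + X * P"
  by (simp add: andre_op_def algebra_simps)

lemma andre_op_add: "andre_op n (P + Q) = andre_op n P + andre_op n Q"
  by (simp add: andre_op_def pderiv_add algebra_simps)

lemma andre_op_smult: "andre_op n (smult c P) = smult c (andre_op n P)"
  by (simp add: andre_op_def pderiv_smult smult_add_right smult_diff_right)

lemma andre_op_0: "andre_op n 0 = 0"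
  by (simp add: andre_op_def)

lemma andre_op_sum: "andre_op n (sum f A) = (\<Sum>x\<in>A. andre_op n (f x))"
  by (induction A rule: infinite_finite_induct) (simp_all add: andre_op_add andre_op_0)

lemma andre_op_X_mult: "andre_op (Suc (j + k)) (X * (P * Q)) = X * (andre_op j P * Q + P * andre_op k Q)"
  by (simp add: andre_op_def pderiv_mult algebra_simps power2_eq_square)

text \<open>By the Leibniz rule \<open>andre_op_X_mult\<close> and Pascal's rule, \<open>andre_op\<close> carries the
  convolution for \<open>andre_poly (m + 2)\<close> into the one for \<open>andre_poly (m + 3)\<close>.\<close>

lemma andre_op_X_andre_conv:
  assumes IH: "\<And>k. k \<in> {1..m} \<Longrightarrow> andre_op k (andre_poly k) = andre_poly (Suc k)"
  shows "andre_op (Suc (Suc m)) (X * andre_conv m) = X * (andre_conv (Suc m) - andre_poly (Suc m))"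
proof -
  have "andre_op (Suc (Suc m)) (X * andre_conv m) =
      (\<Sum>k=1..m. smult (of_nat (m choose k)) (andre_op (Suc (k + (Suc m - k))) (X * (andre_poly k * andre_poly (Suc m - k)))))"
    unfolding andre_conv_def sum_distrib_left andre_op_sum
    by (intro sum.cong refl) (simp add: of_nat_mult_conv_smult[symmetric] andre_op_smult[symmetric] algebra_simps)
  also have "\<dots> = X * (\<Sum>k=1..m. of_nat (m choose k) *
      (andre_poly (Suc k) * andre_poly (Suc m - k) + andre_poly k * andre_poly (Suc (Suc m) - k)))"
    unfolding sum_distrib_left
  proof (rule sum.cong[OF refl])
    fix k assume k: "k \<in> {1..m}"
    then have "Suc m - k \<in> {1..m}" by auto
    then have "andre_op (Suc m - k) (andre_poly (Suc m - k)) = andre_poly (Suc (Suc m) - k)"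
      using IH[of "Suc m - k"] k by (simp add: Suc_diff_le)
    with k show "smult (of_nat (m choose k)) (andre_op (Suc (k + (Suc m - k))) (X * (andre_poly k * andre_poly (Suc m - k)))) =
        X * (of_nat (m choose k) * (andre_poly (Suc k) * andre_poly (Suc m - k) + andre_poly k * andre_poly (Suc (Suc m) - k)))"
      unfolding andre_op_X_mult IH[OF k] by (simp add: of_nat_mult_conv_smult[symmetric] algebra_simps)
  qed
  also have "\<dots> = X * (andre_conv (Suc m) - andre_poly (Suc m))"
    unfolding andre_conv_def sum_choose_Suc_convolution by (simp add: andre_poly_1)
  finally show ?thesis .
qed

lemma andre_poly_Suc_Suc: "andre_poly (Suc (Suc m)) = andre_op (Suc m) (andre_poly (Suc m))"
proof (induction m rule: less_induct)
  case (less m)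
  show ?case
  proof (cases m)
    case 0
    then show ?thesis by (simp add: andre_poly_Suc_Suc_conv andre_conv_def andre_poly_1 andre_op_def)
  next
    case (Suc m')
    have IH: "andre_op k (andre_poly k) = andre_poly (Suc k)" if "k \<in> {1..m'}" for k
      using that less[of "k - 1"] Suc by auto
    have "andre_op (Suc m) (andre_poly (Suc m)) =
        andre_op (Suc m) (andre_poly (Suc m')) + andre_op (Suc m) (X * andre_conv m')"
      unfolding Suc andre_poly_Suc_Suc_conv andre_op_add ..
    also have "andre_op (Suc m) (andre_poly (Suc m')) = andre_poly (Suc m) + X * andre_poly (Suc m')"
      using less[of m'] Suc by (simp add: andre_op_Suc)
    also have "andre_op (Suc m) (X * andre_conv m') = X * (andre_conv m - andre_poly (Suc m'))"
      unfolding Suc by (rule andre_op_X_andre_conv[OF IH])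
    finally show ?thesis
      by (simp add: andre_poly_Suc_Suc_conv[of m] algebra_simps)
  qed
qed

lemma d_eq_coeff_andre_poly: "int (d n i) = coeff (andre_poly n) i"
proof -
  have "coeff (andre_poly n) i = (\<Sum>xs\<in>perms n. if andre xs \<and> ndes xs = i then 1 else 0)"
    unfolding andre_poly_def andre_poly_on_def andre_weight_def coeff_sum
    by (intro sum.cong) (auto simp: X_power_eq_monom)
  also have "\<dots> = int (card {xs \<in> perms n. andre xs \<and> ndes xs = i})"
    by (simp add: sum.If_cases Int_def conj_commute)
  finally show ?thesis by (simp add: d_def card_descents)
qed

lemma andre_op_eq_pCons:
  "andre_op n P = P + smult (int n - 1) (pCons 0 P) + pCons 0 (pderiv P) - smult 2 (pCons 0 (pCons 0 (pderiv P)))"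
proof -
  have "andre_op n P = P + (of_nat n - 1) * (X * P) + X * pderiv P - 2 * (X * (X * pderiv P))"
    by (simp add: andre_op_def algebra_simps power2_eq_square)
  then show ?thesis
    by (simp add: X_def of_nat_mult_conv_smult numeral_mult_conv_smult left_diff_distrib smult_diff_left)
qed

lemma coeff_andre_op_0: "coeff (andre_op n P) 0 = coeff P 0"
  by (simp add: andre_op_eq_pCons)

lemma coeff_andre_op_Suc:
  "coeff (andre_op n P) (Suc i) = of_nat (i + 2) * coeff P (Suc i) + (int n - 1 - 2 * int i) * coeff P i"
  by (cases i) (simp_all add: andre_op_eq_pCons coeff_pderiv algebra_simps)

lemma d_Suc_0: "1 \<le> n \<Longrightarrow> d (Suc n) 0 = d n 0"
  using d_eq_coeff_andre_poly[of "Suc n" 0] d_eq_coeff_andre_poly[of n 0]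
  by (cases n) (simp_all add: andre_poly_Suc_Suc coeff_andre_op_0)

lemma d_Suc_Suc:
  "1 \<le> n \<Longrightarrow> int (d (Suc n) (Suc i)) = of_nat (i + 2) * int (d n (Suc i)) + (int n - 1 - 2 * int i) * int (d n i)"
  by (cases n) (simp_all add: d_eq_coeff_andre_poly andre_poly_Suc_Suc coeff_andre_op_Suc)

lemma d_1_0: "d 1 0 = 1"
  using d_eq_coeff_andre_poly[of 1 0] by (simp add: andre_poly_1)

lemma d_2_0: "d 2 0 = 1"
  using d_Suc_0[of 1] d_1_0 by (simp add: numeral_2_eq_2)

lemma d_eq_0:
  assumes "1 \<le> n" "n \<le> 2 * j"
  shows "d n j = 0"
  using assms
proof (induction n arbitrary: j rule: nat_induct_at_least)
  case base
  then show ?case using d_eq_coeff_andre_poly[of 1 j] by (simp add: andre_poly_1)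
next
  case (Suc n)
  then obtain i where j: "j = Suc i" by (cases j) auto
  have "d n (Suc i) = 0" using Suc j by auto
  moreover have "(int n - 1 - 2 * int i) * int (d n i) = 0"
    using Suc j by (cases "n \<le> 2 * i") auto
  ultimately have "int (d (Suc n) j) = 0" unfolding j d_Suc_Suc[OF Suc(1)] by simp
  then show ?case by simp
qed

lemma d_middle_pos:
  assumes "1 \<le> n"
  shows "0 < d n ((n + 1) div 2 - 1)"
  using assms
proof (induction n rule: nat_induct_at_least)
  case base
  then show ?case using d_1_0 by simp
next
  case (Suc n)
  show ?case
  proof (cases "even n")
    case True
    then obtain i where n: "n = 2 * Suc i" using Suc(1) by (metis evenE not0_implies_Suc mult_0_right not_one_le_zero)
    have "int (d (Suc n) (Suc i)) = int (d n i)"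
      unfolding d_Suc_Suc[OF Suc(1)] using d_eq_0[OF Suc(1), of "Suc i"] n by simp
    then show ?thesis using Suc.IH n by simp
  next
    case False
    then obtain p where n: "n = 2 * p + 1" by (rule oddE)
    show ?thesis
    proof (cases "p = 0")
      case True
      then have "Suc n = 2" using n by simp
      then show ?thesis unfolding \<open>Suc n = 2\<close> using d_2_0 by simp
    next
      case False
      then obtain i where i: "p = Suc i" using not0_implies_Suc by blast
      have "0 < d n (Suc i)" using Suc.IH n i by simp
      moreover have "int (d (Suc n) (Suc i)) = of_nat (i + 2) * int (d n (Suc i)) + 2 * int (d n i)"
        using d_Suc_Suc[OF \<open>1 \<le> n\<close>, of i] n i by simp
      ultimately have "0 < int (d (Suc n) (Suc i))"
        by (simp add: add_pos_nonneg)
      then show ?thesis using n i by simp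
    qed
  qed
qed

section \<open>Expansion of the run polynomial\<close>

definition run_basis :: "nat \<Rightarrow> nat \<Rightarrow> int poly" where
  "run_basis n j = X ^ Suc j * (1 + X) ^ (n - 2 - j)"

definition andre_expansion :: "nat \<Rightarrow> int poly" where
  "andre_expansion n = (\<Sum>j<n. smult (int (d n j)) (run_basis n j))"

lemma pderiv_X_power: "pderiv (X ^ Suc j) = of_nat (Suc j) * X ^ j"
  by (simp only: pderiv_power_Suc pderiv_X of_nat_mult_conv_smult mult_1_right)

lemma pderiv_one_plus_X_power: "pderiv ((1 + X) ^ Suc j) = of_nat (Suc j) * (1 + X) ^ j"
  by (simp only: pderiv_power_Suc pderiv_add pderiv_1 pderiv_X add_0_left of_nat_mult_conv_smult mult_1_right)

lemma runs_op_X_power_mult_one_plus_X_power: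
  assumes "n = j + m + 2"
  shows "runs_op n (X ^ Suc j * (1 + X) ^ m) =
    of_nat (Suc j) * (X ^ Suc j * (1 + X) ^ Suc m) + (of_nat n - 1 - 2 * of_nat j) * (X ^ Suc (Suc j) * (1 + X) ^ m)"
proof (cases m)
  case 0
  have "runs_op n (X ^ Suc j * (1 + X) ^ m) =
      X * (1 - X\<^sup>2) * (of_nat (Suc j) * X ^ j) + (2 * X + (of_nat n - 1) * X\<^sup>2) * X ^ Suc j"
    unfolding runs_op_def 0 by (simp add: pderiv_X_power del: power_Suc)
  then show ?thesis using assms 0 by (simp add: algebra_simps power2_eq_square)
next
  case (Suc m')
  have "runs_op n (X ^ Suc j * (1 + X) ^ m) =
      X * (1 - X\<^sup>2) * (X ^ Suc j * (of_nat (Suc m') * (1 + X) ^ m') + (1 + X) ^ Suc m' * (of_nat (Suc j) * X ^ j))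
      + (2 * X + (of_nat n - 1) * X\<^sup>2) * (X ^ Suc j * (1 + X) ^ Suc m')"
    unfolding runs_op_def pderiv_mult pderiv_X_power pderiv_one_plus_X_power Suc by simp
  then show ?thesis using assms Suc by (simp add: algebra_simps power2_eq_square)
qed

lemma of_int_mult_eq_smult: "of_int k * p = smult k (p :: int poly)"
  by (simp add: of_int_poly)

lemma runs_op_run_basis:
  assumes "j + 2 \<le> n"
  shows "runs_op n (run_basis n j) =
    of_nat (Suc j) * run_basis (Suc n) j + (of_nat n - 1 - 2 * of_nat j) * run_basis (Suc n) (Suc j)"
proof -
  have "Suc n - 2 - j = Suc (n - 2 - j)" "Suc n - 2 - Suc j = n - 2 - j" using assms by auto
  then show ?thesis
    unfolding run_basis_def using runs_op_X_power_mult_one_plus_X_power[of n j "n - 2 - j"] assms by simp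
qed

lemma andre_expansion_Suc:
  assumes "1 \<le> n"
  shows "andre_expansion (Suc n) =
    (\<Sum>j<n. smult (int (Suc j) * int (d n j)) (run_basis (Suc n) j))
    + (\<Sum>j<n. smult ((int n - 1 - 2 * int j) * int (d n j)) (run_basis (Suc n) (Suc j)))"
proof -
  let ?B = "run_basis (Suc n)"
  define G where "G j = (case j of 0 \<Rightarrow> 0 | Suc i \<Rightarrow> (int n - 1 - 2 * int i) * int (d n i))" for j
  have d_Suc: "int (d (Suc n) j) = int (Suc j) * int (d n j) + G j" for j
    using d_Suc_0[OF assms] d_Suc_Suc[OF assms] by (cases j) (simp_all add: G_def algebra_simps)
  have "andre_expansion (Suc n) =
      (\<Sum>j<Suc n. smult (int (Suc j) * int (d n j)) (?B j)) + (\<Sum>j<Suc n. smult (G j) (?B j))"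
    unfolding andre_expansion_def d_Suc smult_add_left sum.distrib ..
  also have "(\<Sum>j<Suc n. smult (int (Suc j) * int (d n j)) (?B j)) =
      (\<Sum>j<n. smult (int (Suc j) * int (d n j)) (?B j))"
    using d_eq_0[OF assms, of n] by simp
  also have "(\<Sum>j<Suc n. smult (G j) (?B j)) =
      (\<Sum>j<n. smult ((int n - 1 - 2 * int j) * int (d n j)) (?B (Suc j)))"
    unfolding sum.lessThan_Suc_shift by (simp add: G_def)
  finally show ?thesis .
qed

lemma runs_op_andre_expansion:
  assumes "2 \<le> n"
  shows "runs_op n (andre_expansion n) = andre_expansion (Suc n)"
proof -
  let ?B = "run_basis (Suc n)"
  have "runs_op n (andre_expansion n) = (\<Sum>j<n. smult (int (d n j)) (runs_op n (run_basis n j)))"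
    unfolding andre_expansion_def runs_op_sum runs_op_smult ..
  also have "\<dots> = (\<Sum>j<n. smult (int (Suc j) * int (d n j)) (?B j))
      + (\<Sum>j<n. smult ((int n - 1 - 2 * int j) * int (d n j)) (?B (Suc j)))"
    unfolding sum.distrib[symmetric]
  proof (rule sum.cong[OF refl])
    fix j assume j: "j \<in> {..<n}"
    show "smult (int (d n j)) (runs_op n (run_basis n j)) =
      smult (int (Suc j) * int (d n j)) (?B j) + smult ((int n - 1 - 2 * int j) * int (d n j)) (?B (Suc j))"
    proof (cases "j + 2 \<le> n")
      case True
      then show ?thesis
        by (simp add: runs_op_run_basis of_int_mult_eq_smult[symmetric] algebra_simps)
    next
      case False
      then have "d n j = 0" using j assms by (intro d_eq_0) auto
      then show ?thesis by simp
    qed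
  qed
  also have "\<dots> = andre_expansion (Suc n)"
    using assms by (simp add: andre_expansion_Suc)
  finally show ?thesis .
qed

lemma R_2: "R 2 = smult 2 X"
proof -
  have "{1..2::nat} = {1, 2}" by auto
  then have "perms 2 = {[1, 2], [2, 1]}"
    by (simp add: permutations_of_set_doubleton)
  then show ?thesis by (simp add: R_eq_sum_X_power numeral_mult_conv_smult)
qed

lemma andre_expansion_2: "andre_expansion 2 = X"
proof -
  have "d 2 1 = 0" using d_eq_0[of 2 1] by simp
  then show ?thesis using d_2_0 by (simp add: andre_expansion_def run_basis_def numeral_2_eq_2)
qed

lemma R_eq_andre_expansion: "2 \<le> n \<Longrightarrow> R n = smult 2 (andre_expansion n)"
proof (induction n rule: nat_induct_at_least)
  case base
  then show ?case by (simp add: R_2 andre_expansion_2)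
next
  case (Suc n)
  then show ?case by (simp add: R_Suc runs_op_smult runs_op_andre_expansion)
qed

lemma M_eq_sum_lessThan:
  "M n = smult 2 (\<Sum>j<(n + 1) div 2. smult (int (d n j)) (X ^ Suc j * (1 + X) ^ ((n + 1) div 2 - Suc j)))"
  by (simp add: M_def Let_def one_plus_X X_def[symmetric] numeral_mult_conv_smult sum.atLeast1_atMost_eq)

lemma andre_expansion_eq_sum_lessThan:
  assumes "2 \<le> n"
  shows "andre_expansion n = (\<Sum>j<(n + 1) div 2. smult (int (d n j)) (run_basis n j))"
proof -
  have "(\<Sum>j\<in>{(n + 1) div 2..<n}. smult (int (d n j)) (run_basis n j)) = 0"
  proof (intro sum.neutral ballI)
    fix j assume "j \<in> {(n + 1) div 2..<n}"
    then have "d n j = 0" using assms by (intro d_eq_0) auto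
    then show "smult (int (d n j)) (run_basis n j) = 0" by simp
  qed
  moreover have "{..<n} = {..<(n + 1) div 2} \<union> {(n + 1) div 2..<n}" by auto
  ultimately show ?thesis
    unfolding andre_expansion_def by (simp add: sum.union_disjoint ivl_disj_int)
qed

lemma R_factorization:
  assumes "2 \<le> n"
  shows "R n = [:1, 1:] ^ ((n - 2) div 2) * M n"
proof -
  let ?l = "(n + 1) div 2" and ?e = "(n - 2) div 2"
  have "run_basis n j = (1 + X) ^ ?e * (X ^ Suc j * (1 + X) ^ (?l - Suc j))" if "j < ?l" for j
  proof -
    have "n - 2 - j = ?e + (?l - Suc j)" using assms that by linarith
    then show ?thesis by (simp add: run_basis_def power_add)
  qed
  then have "andre_expansion n = (1 + X) ^ ?e * (\<Sum>j<?l. smult (int (d n j)) (X ^ Suc j * (1 + X) ^ (?l - Suc j)))"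
    unfolding andre_expansion_eq_sum_lessThan[OF assms] sum_distrib_left mult_smult_right by simp
  then show ?thesis
    by (simp add: R_eq_andre_expansion[OF assms] M_eq_sum_lessThan one_plus_X)
qed

definition nonneg_coeffs :: "'a::{comm_semiring_0, ordered_semiring_0} poly \<Rightarrow> bool" where
  "nonneg_coeffs p \<longleftrightarrow> (\<forall>i. 0 \<le> coeff p i)"

lemma nonneg_coeffs_pCons: "0 \<le> a \<Longrightarrow> nonneg_coeffs p \<Longrightarrow> nonneg_coeffs (pCons a p)"
  by (simp add: nonneg_coeffs_def coeff_pCons split: nat.split)

lemma nonneg_coeffs_0: "nonneg_coeffs 0"
  by (simp add: nonneg_coeffs_def)

lemma nonneg_coeffs_add: "nonneg_coeffs p \<Longrightarrow> nonneg_coeffs q \<Longrightarrow> nonneg_coeffs (p + q)"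
  by (simp add: nonneg_coeffs_def)

lemma nonneg_coeffs_mult: "nonneg_coeffs p \<Longrightarrow> nonneg_coeffs q \<Longrightarrow> nonneg_coeffs (p * q)"
  by (auto simp: nonneg_coeffs_def coeff_mult intro!: sum_nonneg mult_nonneg_nonneg)

lemma nonneg_coeffs_smult: "0 \<le> c \<Longrightarrow> nonneg_coeffs p \<Longrightarrow> nonneg_coeffs (smult c p)"
  by (auto simp: nonneg_coeffs_def intro!: mult_nonneg_nonneg)

lemma nonneg_coeffs_sum: "(\<And>x. x \<in> A \<Longrightarrow> nonneg_coeffs (f x)) \<Longrightarrow> nonneg_coeffs (sum f A)"
  by (induction A rule: infinite_finite_induct) (simp_all add: nonneg_coeffs_0 nonneg_coeffs_add)

lemma nonneg_coeffs_power:
  fixes p :: "'a::{comm_semiring_1, ordered_semiring_1} poly"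
  shows "nonneg_coeffs p \<Longrightarrow> nonneg_coeffs (p ^ k)"
  by (induction k) (simp_all add: nonneg_coeffs_mult, simp add: nonneg_coeffs_def)

lemma nonneg_coeffs_M: "nonneg_coeffs (M n)"
proof -
  have "nonneg_coeffs [:0, 1 :: int:]" "nonneg_coeffs [:1, 1 :: int:]"
    by (simp_all add: nonneg_coeffs_pCons nonneg_coeffs_0)
  then show ?thesis unfolding M_def Let_def numeral_mult_conv_smult
    by (intro nonneg_coeffs_smult nonneg_coeffs_sum nonneg_coeffs_mult nonneg_coeffs_power) auto
qed

lemma poly_sum_X_power_one_plus_X_power_minus_one:
  fixes c :: "nat \<Rightarrow> 'a::comm_ring_1"
  assumes "1 \<le> l"
  shows "poly (\<Sum>k=1..l. smult (c k) ([:0, 1:] ^ k * [:1, 1:] ^ (l - k))) (-1) = (-1) ^ l * c l"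
proof -
  have "poly (\<Sum>k=1..l. smult (c k) ([:0, 1:] ^ k * [:1, 1:] ^ (l - k))) (-1) =
      (\<Sum>k=1..l. c k * ((-1) ^ k * 0 ^ (l - k)))"
    by (simp add: poly_sum)
  also have "\<dots> = (\<Sum>k\<in>{l}. c k * ((-1) ^ k * 0 ^ (l - k)))"
    using assms by (intro sum.mono_neutral_right) (auto simp: power_0_left)
  finally show ?thesis by simp
qed

lemma poly_M_minus_one:
  assumes "1 \<le> n"
  shows "poly (M n) (-1) = 2 * (-1) ^ ((n + 1) div 2) * int (d n ((n + 1) div 2 - 1))"
  using assms poly_sum_X_power_one_plus_X_power_minus_one[of "(n + 1) div 2" "\<lambda>k. int (d n (k - 1))"]
  by (simp add: M_def Let_def)

lemma order_linear_power_mult: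
  fixes q :: "'a::idom poly"
  assumes "poly q a \<noteq> 0"
  shows "order a ([:-a, 1:] ^ e * q) = e"
proof -
  have "q \<noteq> 0" "order a q = 0" using assms by (auto simp: order_root)
  then show ?thesis by (simp add: order_mult order_power_n_n)
qed

theorem mainTheorem6:
  fixes n :: nat
  assumes "n \<ge> 2"
  defines "l \<equiv> (n + 1) div 2"
  shows "R n = [:1, 1:] ^ ((n - 2) div 2) * M n
     \<and> (\<forall>i. coeff (M n) i \<ge> 0)
     \<and> poly (M n) (-1) = 2 * (-1) ^ l * int (d n (l - 1))
     \<and> poly (M n) (-1) \<noteq> 0
     \<and> order (-1) (R n) = (n - 2) div 2"
proof -
  have at_minus_one: "poly (M n) (-1) = 2 * (-1) ^ l * int (d n (l - 1))"
    unfolding l_def using assms by (intro poly_M_minus_one) simp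
  moreover have nonzero: "poly (M n) (-1) \<noteq> 0"
    unfolding at_minus_one l_def using d_middle_pos[of n] assms by simp
  moreover have "order (-1) (R n) = (n - 2) div 2"
    using order_linear_power_mult[OF nonzero] by (simp add: R_factorization[OF assms(1)])
  ultimately show ?thesis
    using R_factorization[OF assms(1)] nonneg_coeffs_M by (simp add: nonneg_coeffs_def)
qed

end
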